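(* Let $c,m\in\mathbb{Z}_{\ge0}$. Let $\mathrm{Sym}$ act on $\mathbb{Z}^{(\mathbb{N}\times[c])}\oplus\mathbb{Z}^m$ by $\sigma(\mathbf{u},\mathbf{v})=(\sigma(\mathbf{u}),\mathbf{v})$. Then every $\mathrm{Sym}$-invariant lattice in $\mathbb{Z}^{(\mathbb{N}\times[c])}\oplus\mathbb{Z}^m$ has a finite equivariant Graver basis.
   Context: $\mathbb{N}=\{1,2,\dots\}$, $[c]=\{1,\dots,c\}$ (empty if $c=0$). $\mathbb{Z}^{(\mathbb{N}\times[c])}$ is the free abelian group with basis $\mathbb{N}\times[c]$ (standard basis $\mathbf{e}_{i,j}$); $\mathbb{Z}^{(\mathbb{N}\times[c])}\oplus\mathbb{Z}^m$ is viewed as the free abelian group on the disjoint union $(\mathbb{N}\times[c])\sqcup[m]$; a lattice is a subgroup. $\mathrm{Sym}$ is the group of permutations of $\mathbb{N}$ fixing all but finitely many points, acting on $\mathbb{Z}^{(\mathbb{N}\times[c])}$ by linear extension of $\sigma(\mathbf{e}_{i,j})=\mathbf{e}_{\sigma(i),j}$. $\mathbf{u}\sqsubseteq\mathbf{v}$ iff $u_kv_k\ge0$ and $|u_k|\le|v_k|$ for every coordinate $k$; the Graver basis of a lattice $L$ is the set of $\sqsubseteq$-minimal elements of $L\setminus\{\mathbf{0}\}$; $\mathcal{G}\subseteq L$ is an equivariant Graver basis if $\{\sigma(\mathbf{g})\mid\sigma\in\mathrm{Sym},\mathbf{g}\in\mathcal{G}\}$ is the Graver basis of $L$. *)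

theory Defs
  imports Main "HOL-Library.Function_Algebras"
begin

text \<open>Index set of Z^(N x [c]) (+) Z^m, realised as a subset of the type
  (nat \<times> nat) + nat: Inl (i,j) with i \<ge> 1, 1 \<le> j \<le> c, and Inr k with 1 \<le> k \<le> m.\<close>

type_synonym vec = "(nat \<times> nat) + nat \<Rightarrow> int"

definition index_set :: "nat \<Rightarrow> nat \<Rightarrow> ((nat \<times> nat) + nat) set" where
  "index_set c m = Inl ` ({1..} \<times> {1..c}) \<union> Inr ` {1..m}"

definition ambient :: "nat \<Rightarrow> nat \<Rightarrow> vec set" where
  "ambient c m = {x. finite {k. x k \<noteq> 0} \<and> (\<forall>k. x k \<noteq> 0 \<longrightarrow> k \<in> index_set c m)}"

definition is_lattice :: "nat \<Rightarrow> nat \<Rightarrow> vec set \<Rightarrow> bool" where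
  "is_lattice c m L \<longleftrightarrow> L \<subseteq> ambient c m \<and> 0 \<in> L \<and>
     (\<forall>x\<in>L. \<forall>y\<in>L. x + y \<in> L) \<and> (\<forall>x\<in>L. - x \<in> L)"

text \<open>Sym: permutations of N = {1,2,...} fixing all but finitely many points
  (extended to nat by fixing 0).\<close>
definition Sym :: "(nat \<Rightarrow> nat) set" where
  "Sym = {\<sigma>. bij \<sigma> \<and> \<sigma> 0 = 0 \<and> finite {i. \<sigma> i \<noteq> i}}"

text \<open>Action: sigma(e_{i,j}) = e_{sigma(i),j} extended linearly, trivial on Z^m.\<close>
definition act :: "(nat \<Rightarrow> nat) \<Rightarrow> vec \<Rightarrow> vec" where
  "act \<sigma> x = (\<lambda>k. case k of Inl (i, j) \<Rightarrow> x (Inl (inv \<sigma> i, j)) | Inr l \<Rightarrow> x (Inr l))"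

definition sym_invariant :: "vec set \<Rightarrow> bool" where
  "sym_invariant L \<longleftrightarrow> (\<forall>\<sigma>\<in>Sym. \<forall>x\<in>L. act \<sigma> x \<in> L)"

definition conf_le :: "vec \<Rightarrow> vec \<Rightarrow> bool" (infix "\<sqsubseteq>" 50) where
  "u \<sqsubseteq> v \<longleftrightarrow> (\<forall>k. u k * v k \<ge> 0 \<and> \<bar>u k\<bar> \<le> \<bar>v k\<bar>)"

definition graver_basis :: "vec set \<Rightarrow> vec set" where
  "graver_basis L = {u \<in> L - {0}. \<not> (\<exists>v \<in> L - {0}. v \<sqsubseteq> u \<and> v \<noteq> u)}"

definition equivariant_graver_basis :: "vec set \<Rightarrow> vec set \<Rightarrow> bool" where
  "equivariant_graver_basis L G \<longleftrightarrow> G \<subseteq> L \<and>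
     {act \<sigma> g | \<sigma> g. \<sigma> \<in> Sym \<and> g \<in> G} = graver_basis L"

end

theory Submission
  imports Defs "HOL-Library.Ramsey"
begin

text \<open>
  Call x below y if \<open>\<sigma>(x)\<close> is conformal to y for some \<open>\<sigma> \<in> Sym\<close>. This is a well-quasi-order
  on the ambient group. Encode x by the finite set of its nonzero columns, each labelled by the
  column in \<open>\<int>\<^sup>c\<close>, together with its part in \<open>\<int>\<^sup>m\<close>: x is below y as soon as the columns of x
  inject into those of y with conformal labels and the \<open>\<int>\<^sup>m\<close> parts are conformal, because an
  injection of finitely many columns extends to an element of Sym. Conformality of integers is
  the product of two copies of \<open>(\<nat>, \<le>)\<close> (positive and negative parts), so it and its
  coordinatewise versions are well-quasi-orders (Ramsey), and Nash-Williams' minimal bad sequence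
  argument lifts this to injective embeddings of finite labelled sets. Every subset of a
  well-quasi-order has a finite basis; on the Graver basis such a basis is an equivariant Graver
  basis, since a nonzero lattice element conformal to a Graver element equals it and Sym
  preserves the Graver basis.
\<close>

definition good :: "('a \<Rightarrow> 'a \<Rightarrow> bool) \<Rightarrow> (nat \<Rightarrow> 'a) \<Rightarrow> bool" where
  "good P f \<longleftrightarrow> (\<exists>i j. i < j \<and> P (f i) (f j))"

definition almost_full_on :: "('a \<Rightarrow> 'a \<Rightarrow> bool) \<Rightarrow> 'a set \<Rightarrow> bool" where
  "almost_full_on P A \<longleftrightarrow> (\<forall>f. (\<forall>i. f i \<in> A) \<longrightarrow> good P f)"

lemma almost_full_onD: "almost_full_on P A \<Longrightarrow> (\<And>i. f i \<in> A) \<Longrightarrow> good P f"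
  unfolding almost_full_on_def by blast

lemma almost_full_on_subset: "almost_full_on P A \<Longrightarrow> B \<subseteq> A \<Longrightarrow> almost_full_on P B"
  unfolding almost_full_on_def by blast

lemma almost_full_on_map:
  assumes "almost_full_on Q B" and "h ` A \<subseteq> B"
    and "\<And>x y. x \<in> A \<Longrightarrow> y \<in> A \<Longrightarrow> Q (h x) (h y) \<Longrightarrow> P x y"
  shows "almost_full_on P A"
  unfolding almost_full_on_def
proof (intro allI impI)
  fix f :: "nat \<Rightarrow> _" assume f: "\<forall>i. f i \<in> A"
  then have "good Q (h \<circ> f)" using assms(1,2) by (intro almost_full_onD) auto
  then obtain i j where "i < j" "Q (h (f i)) (h (f j))" by (auto simp: good_def)
  then show "good P f" using assms(3) f unfolding good_def by blast
qed

lemma almost_full_on_nat_le: "almost_full_on (\<le>) (UNIV :: nat set)"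
  unfolding almost_full_on_def good_def
proof (intro allI impI)
  fix f :: "nat \<Rightarrow> nat"
  obtain i where "\<forall>k. f i \<le> f k"
    using ex_has_least_nat[of "\<lambda>_. True" 0 f] by blast
  then show "\<exists>i j. i < j \<and> f i \<le> f j" by (metis lessI)
qed

lemma almost_full_on_imp_homogeneous_subseq:
  assumes "almost_full_on P A" and "\<And>i. f i \<in> A"
  obtains \<phi> :: "nat \<Rightarrow> nat" where "strict_mono \<phi>" and "\<And>i j. i < j \<Longrightarrow> P (f (\<phi> i)) (f (\<phi> j))"
proof -
  define colour :: "nat set \<Rightarrow> nat" where
    "colour X = (if P (f (Min X)) (f (Max X)) then 0 else 1)" for X
  have "\<forall>x\<in>UNIV. \<forall>y\<in>UNIV. x \<noteq> y \<longrightarrow> colour {x, y} < 2"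
    by (simp add: colour_def)
  then obtain Y t where Y: "infinite Y" and hom: "\<forall>x\<in>Y. \<forall>y\<in>Y. x \<noteq> y \<longrightarrow> colour {x, y} = t"
    using Ramsey2[OF infinite_UNIV_nat] by metis
  define \<phi> where "\<phi> = enumerate Y"
  have mono: "strict_mono \<phi>"
    unfolding \<phi>_def strict_mono_def using enumerate_mono Y by blast
  have colour_\<phi>: "colour {\<phi> i, \<phi> j} = t" "colour {\<phi> i, \<phi> j} = 0 \<longleftrightarrow> P (f (\<phi> i)) (f (\<phi> j))"
    if "i < j" for i j
  proof -
    have less: "\<phi> i < \<phi> j" using mono that by (rule strict_monoD)
    have "\<phi> i \<in> Y" "\<phi> j \<in> Y" unfolding \<phi>_def using Y by (simp_all add: enumerate_in_set)
    moreover have "\<phi> i \<noteq> \<phi> j" using less by simp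
    ultimately show "colour {\<phi> i, \<phi> j} = t" using hom by blast
    show "colour {\<phi> i, \<phi> j} = 0 \<longleftrightarrow> P (f (\<phi> i)) (f (\<phi> j))"
      using less by (simp add: colour_def)
  qed
  obtain i j where "i < j" "P (f (\<phi> i)) (f (\<phi> j))"
    using almost_full_onD[OF assms(1), of "f \<circ> \<phi>"] assms(2) by (auto simp: good_def)
  then have "t = 0" using colour_\<phi> by simp
  with mono colour_\<phi> show thesis by (intro that) simp_all
qed

lemma almost_full_on_Times:
  assumes "almost_full_on P A" and "almost_full_on Q B"
  shows "almost_full_on (\<lambda>x y. P (fst x) (fst y) \<and> Q (snd x) (snd y)) (A \<times> B)"
  unfolding almost_full_on_def
proof (intro allI impI)
  fix f :: "nat \<Rightarrow> _" assume f: "\<forall>i. f i \<in> A \<times> B"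
  have "fst (f i) \<in> A" for i using f by (simp add: mem_Times_iff)
  then obtain \<phi> :: "nat \<Rightarrow> nat"
    where \<phi>: "strict_mono \<phi>" "\<And>i j. i < j \<Longrightarrow> P (fst (f (\<phi> i))) (fst (f (\<phi> j)))"
    by (rule almost_full_on_imp_homogeneous_subseq[OF assms(1), of "\<lambda>i. fst (f i)"]) blast
  have "good Q (\<lambda>i. snd (f (\<phi> i)))"
    using f by (intro almost_full_onD[OF assms(2)]) (simp add: mem_Times_iff)
  then obtain i j where ij: "i < j" "Q (snd (f (\<phi> i))) (snd (f (\<phi> j)))"
    unfolding good_def by blast
  have "\<phi> i < \<phi> j" using \<phi>(1) ij(1) by (rule strict_monoD)
  then show "good (\<lambda>x y. P (fst x) (fst y) \<and> Q (snd x) (snd y)) f"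
    unfolding good_def using \<phi>(2)[OF ij(1)] ij(2) by (intro exI conjI)
qed

lemma almost_full_on_pointwise:
  assumes "almost_full_on P A" and "finite J"
  shows "almost_full_on (\<lambda>u v. \<forall>j\<in>J. P (u j) (v j)) {u. \<forall>j\<in>J. u j \<in> A}"
  using assms(2)
proof (induction J)
  case empty
  show ?case unfolding almost_full_on_def good_def using lessI by blast
next
  case (insert j J)
  show ?case
    by (rule almost_full_on_map[OF almost_full_on_Times[OF insert.IH assms(1)], of "\<lambda>u. (u, u j)"])
      auto
qed

lemma almost_full_on_finite_basis:
  assumes "almost_full_on Q A"
  shows "\<exists>G. finite G \<and> G \<subseteq> A \<and> (\<forall>a\<in>A. \<exists>g\<in>G. Q g a)"
proof (rule ccontr)
  assume no_basis: "\<not> ?thesis"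
  define r where "r = {(G, H). G \<subseteq> H \<and> (\<exists>a\<in>H. \<forall>g\<in>G. \<not> Q g a)}"
  have "trans r" by (rule transI) (auto simp: r_def)
  have step: "\<exists>H. (finite H \<and> H \<subseteq> A) \<and> (G, H) \<in> r" if G: "finite G \<and> G \<subseteq> A" for G
  proof -
    have "\<not> (\<forall>a\<in>A. \<exists>g\<in>G. Q g a)" using no_basis G by blast
    then obtain a where "a \<in> A" "\<forall>g\<in>G. \<not> Q g a" by blast
    then show ?thesis using G by (intro exI[of _ "insert a G"]) (auto simp: r_def)
  qed
  obtain F :: "nat \<Rightarrow> 'a set"
    where F: "\<And>n. finite (F n) \<and> F n \<subseteq> A" and r: "\<And>n m. n < m \<Longrightarrow> (F n, F m) \<in> r"
    by (rule dependent_choice[of r "\<lambda>G. finite G \<and> G \<subseteq> A" "{}", OF \<open>trans r\<close> _ step]) auto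
  have F_mono: "F n \<subseteq> F m" if "n \<le> m" for n m
  proof (cases "n = m")
    case False
    then show ?thesis using r[of n m] that by (simp add: r_def)
  qed simp
  have "\<exists>x. x \<in> F (Suc n) \<and> (\<forall>g\<in>F n. \<not> Q g x)" for n
    using r[of n "Suc n"] by (auto simp: r_def)
  then obtain a :: "nat \<Rightarrow> 'a" where a: "\<And>n. a n \<in> F (Suc n)" "\<And>n. \<forall>g\<in>F n. \<not> Q g (a n)"
    by metis
  have "good Q a" using F a(1) by (intro almost_full_onD[OF assms]) blast
  moreover have "\<not> Q (a i) (a j)" if "i < j" for i j
    using a F_mono[of "Suc i" j] that by auto
  ultimately show False unfolding good_def by blast
qed

lemma ex_minimal_sequence:
  fixes size :: "'a \<Rightarrow> nat" and B :: "(nat \<Rightarrow> 'a) \<Rightarrow> bool"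
  assumes "B g0"
    and closed: "\<And>f. (\<And>n. \<exists>g. B g \<and> (\<forall>k<n. g k = f k)) \<Longrightarrow> B f"
  obtains f where "B f" and "\<And>n g. B g \<Longrightarrow> \<forall>k<n. g k = f k \<Longrightarrow> size (f n) \<le> size (g n)"
proof -
  define ext where
    "ext g n = (ARG_MIN (\<lambda>g'. size (g' n)) g'. B g' \<and> (\<forall>k<n. g' k = g k))" for g n
  have ext: "B (ext g n) \<and> (\<forall>k<n. ext g n k = g k) \<and>
      (\<forall>g'. B g' \<and> (\<forall>k<n. g' k = g k) \<longrightarrow> size (ext g n n) \<le> size (g' n))" if "B g" for g n
    using arg_min_nat_lemma[of "\<lambda>g'. B g' \<and> (\<forall>k<n. g' k = g k)" g "\<lambda>g'. size (g' n)"] that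
    by (simp add: ext_def)
  \<comment> \<open>\<open>h n\<close> agrees with \<open>h (n - 1)\<close> below \<open>n\<close> and has minimal size at \<open>n\<close>;
    its diagonal is the required sequence\<close>
  define h where "h = rec_nat (ext g0 0) (\<lambda>n g. ext g (Suc n))"
  have h_simps: "h 0 = ext g0 0" "h (Suc n) = ext (h n) (Suc n)" for n
    by (simp_all add: h_def)
  have hB: "B (h n)" for n
    by (induction n) (simp_all add: h_simps ext assms(1))
  have h_stable: "h n k = h k k" if "k \<le> n" for n k
    using that
  proof (induction n)
    case (Suc n)
    then show ?case
      by (cases "k = Suc n") (simp_all add: h_simps ext[OF hB])
  qed simp
  show thesis
  proof
    show "B (\<lambda>n. h n n)"
    proof (rule closed)
      fix n show "\<exists>g. B g \<and> (\<forall>k<n. g k = h k k)"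
        using hB h_stable less_imp_le by blast
    qed
  next
    fix n g assume g: "B g" "\<forall>k<n. g k = h k k"
    show "size (h n n) \<le> size (g n)"
    proof (cases n)
      case 0
      have "h 0 = ext g0 0" by (rule h_simps(1))
      then show ?thesis using ext[OF assms(1), of 0] g(1) 0 by simp
    next
      case (Suc n')
      have "\<forall>k<n. g k = h n' k" using g(2) h_stable Suc by (metis less_Suc_eq_le)
      moreover have "h n = ext (h n') n" using Suc h_simps(2) by simp
      ultimately show ?thesis using ext[OF hB[of n'], of n] g(1) by simp
    qed
  qed
qed

lemma minimal_bad_sequence:
  fixes size :: "'a \<Rightarrow> nat"
  assumes "\<not> almost_full_on P A"
  obtains f where "\<And>i. f i \<in> A" and "\<not> good P f"
    and "\<And>n g. \<forall>i. g i \<in> A \<Longrightarrow> \<not> good P g \<Longrightarrow> \<forall>k<n. g k = f k \<Longrightarrow> size (f n) \<le> size (g n)"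
proof -
  define bad where "bad f \<longleftrightarrow> (\<forall>i. f i \<in> A) \<and> \<not> good P f" for f :: "nat \<Rightarrow> 'a"
  obtain g0 where "bad g0" using assms unfolding almost_full_on_def bad_def by blast
  moreover have "bad f" if prefixes: "\<And>n. \<exists>g. bad g \<and> (\<forall>k<n. g k = f k)" for f
  proof -
    have "f i \<in> A" for i
      using prefixes[of "Suc i"] unfolding bad_def by (metis lessI)
    moreover have "\<not> P (f i) (f j)" if "i < j" for i j
      using prefixes[of "Suc j"] that unfolding bad_def good_def by (metis less_SucI lessI)
    ultimately show ?thesis unfolding bad_def good_def by blast
  qed
  ultimately obtain f where f: "bad f"
    and minimal: "\<And>n g. bad g \<Longrightarrow> \<forall>k<n. g k = f k \<Longrightarrow> size (f n) \<le> size (g n)"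
    by (rule ex_minimal_sequence[where B = bad and size = size]) blast+
  show thesis
  proof (rule that)
    show "f i \<in> A" for i using f unfolding bad_def by blast
    show "\<not> good P f" using f unfolding bad_def by blast
    show "size (f n) \<le> size (g n)" if "\<forall>i. g i \<in> A" "\<not> good P g" "\<forall>k<n. g k = f k" for n g
      using minimal[of g n] that unfolding bad_def by blast
  qed
qed

definition embeds :: "('b \<Rightarrow> 'b \<Rightarrow> bool) \<Rightarrow> 'i set \<times> ('i \<Rightarrow> 'b) \<Rightarrow> 'i set \<times> ('i \<Rightarrow> 'b) \<Rightarrow> bool" where
  "embeds P x y \<longleftrightarrow>
     (\<exists>p. inj_on p (fst x) \<and> p ` fst x \<subseteq> fst y \<and> (\<forall>i\<in>fst x. P (snd x i) (snd y (p i))))"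

definition finite_labellings :: "'b set \<Rightarrow> ('i set \<times> ('i \<Rightarrow> 'b)) set" where
  "finite_labellings A = {x. finite (fst x) \<and> snd x ` fst x \<subseteq> A}"

lemma embeds_empty: "fst x = {} \<Longrightarrow> embeds P x y"
  unfolding embeds_def by simp

lemma embeds_subset_right: "embeds P x (T, snd y) \<Longrightarrow> T \<subseteq> fst y \<Longrightarrow> embeds P x y"
  unfolding embeds_def by auto

lemma embeds_insert:
  assumes "embeds P (fst x - {a}, snd x) (fst y - {b}, snd y)"
    and "a \<in> fst x" and "b \<in> fst y" and "P (snd x a) (snd y b)"
  shows "embeds P x y"
proof -
  obtain p where p: "inj_on p (fst x - {a})" "p ` (fst x - {a}) \<subseteq> fst y - {b}"
    "\<forall>i\<in>fst x - {a}. P (snd x i) (snd y (p i))"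
    using assms(1) unfolding embeds_def by auto
  have "inj_on (p(a := b)) (fst x - {a})" using p(1) by (simp add: inj_on_def)
  moreover have "b \<notin> p(a := b) ` (fst x - {a})" using p(2) by auto
  ultimately have "inj_on (p(a := b)) (insert a (fst x - {a}))"
    unfolding inj_on_insert by simp
  then have "inj_on (p(a := b)) (fst x)" using insert_Diff[OF assms(2)] by metis
  moreover have "p(a := b) ` fst x \<subseteq> fst y" using p(2) assms(3) by auto
  moreover have "\<forall>i\<in>fst x. P (snd x i) (snd y ((p(a := b)) i))" using p(3) assms(4) by auto
  ultimately show ?thesis unfolding embeds_def by blast
qed

lemma shrink_tail_not_good:
  fixes f :: "nat \<Rightarrow> 'i set \<times> ('i \<Rightarrow> 'b)" and \<phi> :: "nat \<Rightarrow> nat"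
  assumes f_bad: "\<And>i j. i < j \<Longrightarrow> \<not> embeds P (f i) (f j)"
    and a: "\<And>n. a n \<in> fst (f n)" and \<phi>: "strict_mono \<phi>"
    and labels: "\<And>i j. i < j \<Longrightarrow> P (snd (f (\<phi> i)) (a (\<phi> i))) (snd (f (\<phi> j)) (a (\<phi> j)))"
  shows "\<not> good (embeds P) (\<lambda>k. if k < \<phi> 0 then f k
    else (fst (f (\<phi> (k - \<phi> 0))) - {a (\<phi> (k - \<phi> 0))}, snd (f (\<phi> (k - \<phi> 0)))))"
    (is "\<not> good _ ?h")
proof
  define shrink where "shrink n = (fst (f n) - {a n}, snd (f n))" for n
  assume "good (embeds P) ?h"
  then obtain i j where ij: "i < j" "embeds P (?h i) (?h j)" unfolding good_def by blast
  have \<phi>_ge: "\<phi> 0 \<le> \<phi> k" for k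
    using \<phi> by (simp add: strict_mono_less_eq)
  consider "j < \<phi> 0" | "i < \<phi> 0" "\<phi> 0 \<le> j" | "\<phi> 0 \<le> i" using ij(1) by linarith
  then show False
  proof cases
    case 1
    then have "embeds P (f i) (f j)" using ij by simp
    then show False using f_bad ij(1) by blast
  next
    case 2
    then have "embeds P (f i) (shrink (\<phi> (j - \<phi> 0)))" using ij(2) by (simp add: shrink_def)
    then have "embeds P (f i) (f (\<phi> (j - \<phi> 0)))"
      unfolding shrink_def by (rule embeds_subset_right) auto
    moreover have "i < \<phi> (j - \<phi> 0)" using 2 \<phi>_ge by (meson less_le_trans)
    ultimately show False using f_bad by blast
  next
    case 3
    define i' j' where "i' = \<phi> (i - \<phi> 0)" and "j' = \<phi> (j - \<phi> 0)"
    have "i - \<phi> 0 < j - \<phi> 0" using 3 ij(1) by linarith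
    then have "i' < j'" and labels': "P (snd (f i') (a i')) (snd (f j') (a j'))"
      unfolding i'_def j'_def using \<phi> by (auto intro: strict_monoD labels)
    have "embeds P (shrink i') (shrink j')"
      using 3 ij by (simp add: shrink_def i'_def j'_def)
    then have "embeds P (f i') (f j')"
      unfolding shrink_def
      by (rule embeds_insert[of P "f i'" "a i'" "f j'" "a j'", OF _ a a labels'])
    then show False using f_bad \<open>i' < j'\<close> by blast
  qed
qed

lemma almost_full_on_embeds:
  assumes "almost_full_on P A"
  shows "almost_full_on (embeds P) (finite_labellings A :: ('i set \<times> ('i \<Rightarrow> 'b)) set)"
proof (rule ccontr)
  assume "\<not> ?thesis"
  then obtain f :: "nat \<Rightarrow> 'i set \<times> ('i \<Rightarrow> 'b)"
    where f: "\<And>n. f n \<in> finite_labellings A" and "\<not> good (embeds P) f"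
    and minimal: "\<And>n g. \<forall>i. g i \<in> finite_labellings A \<Longrightarrow> \<not> good (embeds P) g \<Longrightarrow>
      \<forall>k<n. g k = f k \<Longrightarrow> card (fst (f n)) \<le> card (fst (g n))"
    by (rule minimal_bad_sequence[where size = "\<lambda>x. card (fst x)"]) blast+
  then have f_bad: "i < j \<Longrightarrow> \<not> embeds P (f i) (f j)" for i j
    unfolding good_def by blast
  have "\<exists>a. a \<in> fst (f n)" for n
    using embeds_empty[of "f n" P "f (Suc n)"] f_bad[of n "Suc n"] by blast
  then obtain a where a: "\<And>n. a n \<in> fst (f n)" by metis
  have "snd (f n) (a n) \<in> A" for n using f a unfolding finite_labellings_def by blast
  then obtain \<phi> :: "nat \<Rightarrow> nat" where \<phi>: "strict_mono \<phi>"
    and labels: "\<And>i j. i < j \<Longrightarrow> P (snd (f (\<phi> i)) (a (\<phi> i))) (snd (f (\<phi> j)) (a (\<phi> j)))"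
    by (rule almost_full_on_imp_homogeneous_subseq[OF assms, of "\<lambda>n. snd (f n) (a n)"]) blast
  \<comment> \<open>removing the points \<open>a\<close> from the tail keeps the sequence bad but makes it
    smaller than \<open>f\<close> at \<open>\<phi> 0\<close>\<close>
  define h where "h k = (if k < \<phi> 0 then f k
    else (fst (f (\<phi> (k - \<phi> 0))) - {a (\<phi> (k - \<phi> 0))}, snd (f (\<phi> (k - \<phi> 0)))))" for k
  have "\<not> good (embeds P) h"
    unfolding h_def using f_bad a \<phi> labels by (rule shrink_tail_not_good)
  moreover have "h k \<in> finite_labellings A" for k
    using f unfolding h_def finite_labellings_def by auto
  ultimately have "card (fst (f (\<phi> 0))) \<le> card (fst (h (\<phi> 0)))"
    using minimal[of h "\<phi> 0"] by (auto simp: h_def)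
  moreover have "card (fst (h (\<phi> 0))) < card (fst (f (\<phi> 0)))"
    using card_Diff1_less[OF _ a[of "\<phi> 0"]] f[of "\<phi> 0"]
    by (simp add: h_def finite_labellings_def)
  ultimately show False by simp
qed

definition conf_int :: "int \<Rightarrow> int \<Rightarrow> bool" where
  "conf_int a b \<longleftrightarrow> 0 \<le> a * b \<and> \<bar>a\<bar> \<le> \<bar>b\<bar>"

lemma conf_le_iff_conf_int: "u \<sqsubseteq> v \<longleftrightarrow> (\<forall>k. conf_int (u k) (v k))"
  unfolding conf_le_def conf_int_def ..

lemma conf_int_0_left [simp]: "conf_int 0 b"
  by (simp add: conf_int_def)

lemma conf_int_if_nat_le:
  assumes "nat a \<le> nat b" and "nat (- a) \<le> nat (- b)"
  shows "conf_int a b"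
proof -
  consider "0 < a" | "a = 0" | "a < 0" by linarith
  then show ?thesis
  proof cases
    case 1
    then have "a \<le> b" using assms(1) by linarith
    then show ?thesis using 1 by (simp add: conf_int_def)
  next
    case 3
    then have "b \<le> a" using assms(2) by linarith
    then show ?thesis using 3 by (simp add: conf_int_def mult_nonpos_nonpos)
  qed simp
qed

lemma almost_full_on_conf_int: "almost_full_on conf_int UNIV"
  by (rule almost_full_on_map[OF almost_full_on_Times[OF almost_full_on_nat_le almost_full_on_nat_le],
      of "\<lambda>a. (nat a, nat (- a))"])
    (auto intro: conf_int_if_nat_le)

lemma inj_on_extends_to_bij:
  assumes "finite S" and "inj_on p S"
  obtains \<sigma> where "bij \<sigma>" and "\<And>i. i \<in> S \<Longrightarrow> \<sigma> i = p i"
    and "\<And>i. i \<notin> S \<union> p ` S \<Longrightarrow> \<sigma> i = i"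
proof -
  define T where "T = S \<union> p ` S"
  have "finite T" using assms(1) by (simp add: T_def)
  moreover have "card (T - S) = card (T - p ` S)"
    using assms \<open>finite T\<close> by (simp add: T_def card_Diff_subset card_image)
  ultimately obtain q where q: "bij_betw q (T - S) (T - p ` S)"
    by (meson finite_Diff finite_same_card_bij)
  define \<sigma> where "\<sigma> i = (if i \<in> S then p i else if i \<in> T then q i else i)" for i
  have "bij_betw \<sigma> S (p ` S)"
    using assms(2) by (simp add: \<sigma>_def bij_betw_def inj_on_def)
  moreover have "bij_betw \<sigma> (T - S) (T - p ` S)"
    using q by (rule bij_betw_cong[THEN iffD1, rotated]) (simp add: \<sigma>_def)
  ultimately have "bij_betw \<sigma> (S \<union> (T - S)) (p ` S \<union> (T - p ` S))"
    by (rule bij_betw_combine) blast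
  moreover have "S \<union> (T - S) = T" and "p ` S \<union> (T - p ` S) = T"
    by (auto simp: T_def)
  ultimately have "bij_betw \<sigma> T T" by simp
  moreover have "bij_betw \<sigma> (- T) (- T)"
    by (rule bij_betw_cong[THEN iffD1, rotated, OF bij_betw_id]) (simp add: \<sigma>_def T_def)
  ultimately have "bij_betw \<sigma> (T \<union> - T) (T \<union> - T)"
    by (rule bij_betw_combine) blast
  then have "bij \<sigma>" by (simp only: Compl_partition)
  then show thesis
    by (rule that) (auto simp: \<sigma>_def T_def)
qed

lemma inj_on_extends_to_Sym:
  assumes "finite S" and "inj_on p S" and "0 \<notin> S \<union> p ` S"
  obtains \<sigma> where "\<sigma> \<in> Sym" and "\<And>i. i \<in> S \<Longrightarrow> \<sigma> i = p i"
proof -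
  obtain \<sigma> where \<sigma>: "bij \<sigma>" "\<And>i. i \<in> S \<Longrightarrow> \<sigma> i = p i" "\<And>i. i \<notin> S \<union> p ` S \<Longrightarrow> \<sigma> i = i"
    using inj_on_extends_to_bij[OF assms(1,2)] by blast
  have "{i. \<sigma> i \<noteq> i} \<subseteq> S \<union> p ` S" using \<sigma>(3) by blast
  then have "finite {i. \<sigma> i \<noteq> i}" by (rule finite_subset) (simp add: assms(1))
  then have "\<sigma> \<in> Sym" using \<sigma>(1,3) assms(3) by (simp add: Sym_def)
  then show thesis using \<sigma>(2) by (rule that)
qed

lemma Sym_inv: "\<sigma> \<in> Sym \<Longrightarrow> inv \<sigma> \<in> Sym"
proof -
  assume "\<sigma> \<in> Sym"
  then have \<sigma>: "bij \<sigma>" "\<sigma> 0 = 0" "finite {i. \<sigma> i \<noteq> i}" unfolding Sym_def by auto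
  have "inv \<sigma> i = i \<longleftrightarrow> \<sigma> i = i" for i
    using \<sigma>(1) by (metis bij_inv_eq_iff)
  then show "inv \<sigma> \<in> Sym"
    using \<sigma> by (simp add: Sym_def bij_imp_bij_inv)
qed

lemma act_inv_act: "bij \<sigma> \<Longrightarrow> act (inv \<sigma>) (act \<sigma> x) = x"
  by (auto simp: act_def bij_is_inj inv_inv_eq split: sum.split)

lemma act_act_inv: "bij \<sigma> \<Longrightarrow> act \<sigma> (act (inv \<sigma>) x) = x"
  using act_inv_act[of "inv \<sigma>" x] by (simp add: bij_imp_bij_inv inv_inv_eq)

lemma act_conf_le: "u \<sqsubseteq> v \<Longrightarrow> act \<sigma> u \<sqsubseteq> act \<sigma> v"
  unfolding conf_le_def act_def by (simp split: sum.split)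

lemma act_eq_0_iff: "bij \<sigma> \<Longrightarrow> act \<sigma> x = 0 \<longleftrightarrow> x = 0"
proof -
  have "act \<tau> 0 = 0" for \<tau> by (auto simp: act_def split: sum.split)
  then show "bij \<sigma> \<Longrightarrow> act \<sigma> x = 0 \<longleftrightarrow> x = 0" by (metis act_inv_act)
qed

lemma graver_basis_minimal: "g \<in> graver_basis L \<Longrightarrow> v \<in> L \<Longrightarrow> v \<noteq> 0 \<Longrightarrow> v \<sqsubseteq> g \<Longrightarrow> v = g"
  unfolding graver_basis_def by blast

lemma act_in_graver_basis:
  assumes "sym_invariant L" and "\<sigma> \<in> Sym" and "g \<in> graver_basis L"
  shows "act \<sigma> g \<in> graver_basis L"
proof -
  have bij: "bij \<sigma>" using assms(2) by (simp add: Sym_def)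
  have "act \<sigma> g \<in> L - {0}"
    using assms act_eq_0_iff[OF bij] unfolding sym_invariant_def graver_basis_def by auto
  moreover have "v = act \<sigma> g" if "v \<in> L - {0}" "v \<sqsubseteq> act \<sigma> g" for v
  proof -
    have "act (inv \<sigma>) v \<in> L" using assms(1) Sym_inv[OF assms(2)] that(1)
      unfolding sym_invariant_def by blast
    moreover have "act (inv \<sigma>) v \<noteq> 0"
      using that(1) act_eq_0_iff[OF bij_imp_bij_inv[OF bij]] by blast
    moreover have "act (inv \<sigma>) v \<sqsubseteq> g"
      using act_conf_le[OF that(2), of "inv \<sigma>"] by (simp add: act_inv_act[OF bij])
    ultimately have "act (inv \<sigma>) v = g" using graver_basis_minimal[OF assms(3)] by blast
    then show ?thesis using act_act_inv[OF bij] by metis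
  qed
  ultimately show ?thesis unfolding graver_basis_def by blast
qed

definition column_support :: "vec \<Rightarrow> nat set" where
  "column_support x = {i. \<exists>j. x (Inl (i, j)) \<noteq> 0}"

definition column :: "vec \<Rightarrow> nat \<Rightarrow> nat \<Rightarrow> int" where
  "column x i j = x (Inl (i, j))"

lemma ambient_nonzero_Inl: "x \<in> ambient c m \<Longrightarrow> x (Inl (i, j)) \<noteq> 0 \<Longrightarrow> 1 \<le> i \<and> j \<in> {1..c}"
  unfolding ambient_def index_set_def by auto

lemma ambient_nonzero_Inr: "x \<in> ambient c m \<Longrightarrow> x (Inr l) \<noteq> 0 \<Longrightarrow> l \<in> {1..m}"
  unfolding ambient_def index_set_def by auto

lemma finite_column_support: "x \<in> ambient c m \<Longrightarrow> finite (column_support x)"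
proof -
  assume "x \<in> ambient c m"
  then have "finite {k. x k \<noteq> 0}" by (simp add: ambient_def)
  moreover have "column_support x \<subseteq> (\<lambda>k. case k of Inl (i, j) \<Rightarrow> i | Inr _ \<Rightarrow> 0) ` {k. x k \<noteq> 0}"
    unfolding column_support_def by (force intro: image_eqI[where x = "Inl (_, _)"])
  ultimately show ?thesis by (rule finite_surj)
qed

lemma conf_le_act_if_embeds:
  assumes x: "x \<in> ambient c m" and y: "y \<in> ambient c m"
    and columns: "embeds (\<lambda>u v. \<forall>j\<in>{1..c}. conf_int (u j) (v j))
      (column_support x, column x) (column_support y, column y)"
    and tails: "\<forall>l\<in>{1..m}. conf_int (x (Inr l)) (y (Inr l))"
  shows "\<exists>\<sigma>\<in>Sym. act \<sigma> x \<sqsubseteq> y"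
proof -
  obtain p where p: "inj_on p (column_support x)" "p ` column_support x \<subseteq> column_support y"
    "\<And>i j. i \<in> column_support x \<Longrightarrow> j \<in> {1..c} \<Longrightarrow> conf_int (column x i j) (column y (p i) j)"
    using columns unfolding embeds_def by auto
  have "0 \<notin> column_support z" if "z \<in> ambient c m" for z
    using ambient_nonzero_Inl[OF that] by (fastforce simp: column_support_def)
  then have "0 \<notin> column_support x \<union> p ` column_support x" using x y p(2) by blast
  then obtain \<sigma> where \<sigma>: "\<sigma> \<in> Sym" "\<And>i. i \<in> column_support x \<Longrightarrow> \<sigma> i = p i"
    using inj_on_extends_to_Sym[OF finite_column_support[OF x] p(1)] by blast
  have bij: "bij \<sigma>" using \<sigma>(1) by (simp add: Sym_def)
  have "conf_int (act \<sigma> x k) (y k)" for k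
  proof (cases k)
    case (Inl ij)
    obtain i j where ij: "ij = (i, j)" by fastforce
    define i' where "i' = inv \<sigma> i"
    have \<sigma>_i': "\<sigma> i' = i" unfolding i'_def using bij by (simp add: bij_is_surj surj_f_inv_f)
    have act_x: "act \<sigma> x (Inl (i, j)) = column x i' j" by (simp add: act_def column_def i'_def)
    show ?thesis
    proof (cases "column x i' j = 0")
      case False
      then have "i' \<in> column_support x" and "j \<in> {1..c}"
        using ambient_nonzero_Inl[OF x] by (auto simp: column_support_def column_def)
      then have "conf_int (column x i' j) (column y (p i') j)" by (rule p(3))
      moreover have "p i' = i" using \<sigma>(2)[OF \<open>i' \<in> column_support x\<close>] \<sigma>_i' by simp
      ultimately show ?thesis by (simp add: act_x column_def Inl ij)
    qed (simp add: act_x Inl ij)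
  next
    case (Inr l)
    then show ?thesis
      using tails ambient_nonzero_Inr[OF x, of l] by (cases "x (Inr l) = 0") (simp_all add: act_def)
  qed
  then show ?thesis using \<sigma>(1) unfolding conf_le_iff_conf_int by blast
qed

lemma almost_full_on_Sym_conf_le: "almost_full_on (\<lambda>x y. \<exists>\<sigma>\<in>Sym. act \<sigma> x \<sqsubseteq> y) (ambient c m)"
proof (rule almost_full_on_map)
  let ?pointwise = "\<lambda>J u v. \<forall>j\<in>J. conf_int (u j) (v j)"
  have pointwise: "almost_full_on (?pointwise J) UNIV" if "finite J" for J
    using almost_full_on_pointwise[OF almost_full_on_conf_int that] by simp
  show "almost_full_on
      (\<lambda>x y. embeds (?pointwise {1..c}) (fst x) (fst y) \<and> ?pointwise {1..m} (snd x) (snd y))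
      (finite_labellings UNIV \<times> UNIV)"
    by (intro almost_full_on_Times almost_full_on_embeds pointwise finite_atLeastAtMost)
  show "(\<lambda>x. ((column_support x, column x), \<lambda>l. x (Inr l))) ` ambient c m \<subseteq>
      finite_labellings UNIV \<times> UNIV"
    using finite_column_support by (auto simp: finite_labellings_def)
qed (auto intro: conf_le_act_if_embeds)

lemma equivariant_graver_basisI:
  assumes "sym_invariant L" and "G \<subseteq> graver_basis L"
    and below: "\<And>g. g \<in> graver_basis L \<Longrightarrow> \<exists>h\<in>G. \<exists>\<sigma>\<in>Sym. act \<sigma> h \<sqsubseteq> g"
  shows "equivariant_graver_basis L G"
proof -
  have orbit: "act \<sigma> h \<in> graver_basis L" if "\<sigma> \<in> Sym" "h \<in> G" for \<sigma> h
    using act_in_graver_basis[OF assms(1) that(1)] assms(2) that(2) by blast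
  have "g \<in> {act \<sigma> h | \<sigma> h. \<sigma> \<in> Sym \<and> h \<in> G}" if g: "g \<in> graver_basis L" for g
  proof -
    obtain h \<sigma> where h: "h \<in> G" "\<sigma> \<in> Sym" "act \<sigma> h \<sqsubseteq> g" using below g by blast
    have "act \<sigma> h \<in> L" "act \<sigma> h \<noteq> 0"
      using orbit[OF h(2,1)] by (simp_all add: graver_basis_def)
    then have "act \<sigma> h = g" using graver_basis_minimal[OF g _ _ h(3)] by blast
    then show ?thesis using h(1,2) by blast
  qed
  then have "{act \<sigma> h | \<sigma> h. \<sigma> \<in> Sym \<and> h \<in> G} = graver_basis L"
    using orbit by blast
  moreover have "G \<subseteq> L" using assms(2) by (auto simp: graver_basis_def)
  ultimately show ?thesis unfolding equivariant_graver_basis_def by blast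
qed

theorem lemma5p12:
  fixes c m :: nat and L :: "vec set"
  assumes "is_lattice c m L" and "sym_invariant L"
  shows "\<exists>G. finite G \<and> equivariant_graver_basis L G"
proof -
  have "graver_basis L \<subseteq> L" unfolding graver_basis_def by blast
  also have "L \<subseteq> ambient c m" using assms(1) unfolding is_lattice_def by blast
  finally have af: "almost_full_on (\<lambda>x y. \<exists>\<sigma>\<in>Sym. act \<sigma> x \<sqsubseteq> y) (graver_basis L)"
    by (rule almost_full_on_subset[OF almost_full_on_Sym_conf_le])
  obtain G where G: "finite G" "G \<subseteq> graver_basis L"
    and below: "\<forall>g\<in>graver_basis L. \<exists>h\<in>G. \<exists>\<sigma>\<in>Sym. act \<sigma> h \<sqsubseteq> g"
    using almost_full_on_finite_basis[OF af] by blast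
  have "equivariant_graver_basis L G"
    using assms(2) G(2) by (rule equivariant_graver_basisI) (use below in blast)
  with G(1) show ?thesis by blast
qed

end
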